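(* A morphism $g:(V,f,h)\to(V',f',h')$ in the category $\mathcal R(P,I)$ is a monomorphism in $\mathcal R(P,I)$ if and only if $g$ is injective (at every vertex), and it is an epimorphism in $\mathcal R(P,I)$ if and only if $g$ is surjective (at every vertex).
   Context: Let $\tilde Q$ be a finite acyclic quiver, $P$ a fixed projective representation and $I$ a fixed injective representation of $\tilde Q$ over $\mathbb C$ (finite-dimensional). The category $\mathcal R(P,I)$ has as objects triples $(V,f,h)$ with $V$ a finite-dimensional representation of $\tilde Q$, $f:P\to V$ and $h:V\to I$ morphisms of representations; a morphism $(V,f,h)\to(V',f',h')$ is a morphism of representations $g:V\to V'$ with $g\circ f=f'$ and $h'\circ g=h$; composition is composition of representation morphisms. *)

theory Defs
  imports Complex_Main "Jordan_Normal_Form.Matrix"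
begin

text \<open>A finite-dimensional representation over the complex numbers is
given (up to isomorphism, in coordinates) by a dimension vector and, for every arrow a,
a complex matrix representing the linear map from the space at src a to the space at tgt a.\<close>

record ('v, 'e) qrep =
  dimv :: "'v \<Rightarrow> nat"
  amap :: "'e \<Rightarrow> complex mat"

definition acyclic_quiver :: "('e \<Rightarrow> 'v) \<Rightarrow> ('e \<Rightarrow> 'v) \<Rightarrow> bool" where
  "acyclic_quiver src tgt \<longleftrightarrow> acyclic {(src a, tgt a) | a. True}"

definition is_rep :: "('e \<Rightarrow> 'v) \<Rightarrow> ('e \<Rightarrow> 'v) \<Rightarrow> ('v, 'e) qrep \<Rightarrow> bool" where
  "is_rep src tgt V \<longleftrightarrow>
     (\<forall>a. amap V a \<in> carrier_mat (dimv V (tgt a)) (dimv V (src a)))"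

definition rep_hom ::
  "('e \<Rightarrow> 'v) \<Rightarrow> ('e \<Rightarrow> 'v) \<Rightarrow> ('v, 'e) qrep \<Rightarrow> ('v, 'e) qrep \<Rightarrow> ('v \<Rightarrow> complex mat) \<Rightarrow> bool" where
  "rep_hom src tgt V W g \<longleftrightarrow>
     (\<forall>i. g i \<in> carrier_mat (dimv W i) (dimv V i)) \<and>
     (\<forall>a. g (tgt a) * amap V a = amap W a * g (src a))"

definition hom_comp :: "('v \<Rightarrow> complex mat) \<Rightarrow> ('v \<Rightarrow> complex mat) \<Rightarrow> ('v \<Rightarrow> complex mat)" where
  "hom_comp g2 g1 = (\<lambda>i. g2 i * g1 i)"

definition mat_inj :: "complex mat \<Rightarrow> bool" where
  "mat_inj A \<longleftrightarrow> (\<forall>x\<in>carrier_vec (dim_col A). \<forall>y\<in>carrier_vec (dim_col A).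
                     A *\<^sub>v x = A *\<^sub>v y \<longrightarrow> x = y)"

definition mat_surj :: "complex mat \<Rightarrow> bool" where
  "mat_surj A \<longleftrightarrow> (\<forall>y\<in>carrier_vec (dim_row A). \<exists>x\<in>carrier_vec (dim_col A). A *\<^sub>v x = y)"

text \<open>Projective and injective representations (in the category of finite-dimensional
representations, whose epimorphisms/monomorphisms are the vertexwise surjective/injective morphisms).\<close>
definition projective_rep :: "('e \<Rightarrow> 'v) \<Rightarrow> ('e \<Rightarrow> 'v) \<Rightarrow> ('v, 'e) qrep \<Rightarrow> bool" where
  "projective_rep src tgt P \<longleftrightarrow> is_rep src tgt P \<and>
     (\<forall>X Y p u. is_rep src tgt X \<and> is_rep src tgt Y \<and> rep_hom src tgt X Y p \<and>
        (\<forall>i. mat_surj (p i)) \<and> rep_hom src tgt P Y u \<longrightarrow>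
        (\<exists>v. rep_hom src tgt P X v \<and> hom_comp p v = u))"

definition injective_rep :: "('e \<Rightarrow> 'v) \<Rightarrow> ('e \<Rightarrow> 'v) \<Rightarrow> ('v, 'e) qrep \<Rightarrow> bool" where
  "injective_rep src tgt I \<longleftrightarrow> is_rep src tgt I \<and>
     (\<forall>X Y m u. is_rep src tgt X \<and> is_rep src tgt Y \<and> rep_hom src tgt X Y m \<and>
        (\<forall>i. mat_inj (m i)) \<and> rep_hom src tgt X I u \<longrightarrow>
        (\<exists>v. rep_hom src tgt Y I v \<and> hom_comp v m = u))"

definition R_obj ::
  "('e \<Rightarrow> 'v) \<Rightarrow> ('e \<Rightarrow> 'v) \<Rightarrow> ('v, 'e) qrep \<Rightarrow> ('v, 'e) qrep \<Rightarrow>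
   ('v, 'e) qrep \<times> ('v \<Rightarrow> complex mat) \<times> ('v \<Rightarrow> complex mat) \<Rightarrow> bool" where
  "R_obj src tgt P I X \<longleftrightarrow> (case X of (V, f, h) \<Rightarrow>
     is_rep src tgt V \<and> rep_hom src tgt P V f \<and> rep_hom src tgt V I h)"

definition R_mor ::
  "('e \<Rightarrow> 'v) \<Rightarrow> ('e \<Rightarrow> 'v) \<Rightarrow> ('v, 'e) qrep \<Rightarrow> ('v, 'e) qrep \<Rightarrow>
   ('v, 'e) qrep \<times> ('v \<Rightarrow> complex mat) \<times> ('v \<Rightarrow> complex mat) \<Rightarrow>
   ('v, 'e) qrep \<times> ('v \<Rightarrow> complex mat) \<times> ('v \<Rightarrow> complex mat) \<Rightarrow>
   ('v \<Rightarrow> complex mat) \<Rightarrow> bool" where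
  "R_mor src tgt P I X Y g \<longleftrightarrow> R_obj src tgt P I X \<and> R_obj src tgt P I Y \<and>
     (case X of (V, f, h) \<Rightarrow> case Y of (V', f', h') \<Rightarrow>
        rep_hom src tgt V V' g \<and> hom_comp g f = f' \<and> hom_comp h' g = h)"

definition R_mono ::
  "('e \<Rightarrow> 'v) \<Rightarrow> ('e \<Rightarrow> 'v) \<Rightarrow> ('v, 'e) qrep \<Rightarrow> ('v, 'e) qrep \<Rightarrow>
   ('v, 'e) qrep \<times> ('v \<Rightarrow> complex mat) \<times> ('v \<Rightarrow> complex mat) \<Rightarrow>
   ('v, 'e) qrep \<times> ('v \<Rightarrow> complex mat) \<times> ('v \<Rightarrow> complex mat) \<Rightarrow>
   ('v \<Rightarrow> complex mat) \<Rightarrow> bool" where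
  "R_mono src tgt P I X Y g \<longleftrightarrow> R_mor src tgt P I X Y g \<and>
     (\<forall>Z g1 g2. R_mor src tgt P I Z X g1 \<and> R_mor src tgt P I Z X g2 \<and>
        hom_comp g g1 = hom_comp g g2 \<longrightarrow> g1 = g2)"

definition R_epi ::
  "('e \<Rightarrow> 'v) \<Rightarrow> ('e \<Rightarrow> 'v) \<Rightarrow> ('v, 'e) qrep \<Rightarrow> ('v, 'e) qrep \<Rightarrow>
   ('v, 'e) qrep \<times> ('v \<Rightarrow> complex mat) \<times> ('v \<Rightarrow> complex mat) \<Rightarrow>
   ('v, 'e) qrep \<times> ('v \<Rightarrow> complex mat) \<times> ('v \<Rightarrow> complex mat) \<Rightarrow>
   ('v \<Rightarrow> complex mat) \<Rightarrow> bool" where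
  "R_epi src tgt P I X Y g \<longleftrightarrow> R_mor src tgt P I X Y g \<and>
     (\<forall>Z g1 g2. R_mor src tgt P I Y Z g1 \<and> R_mor src tgt P I Y Z g2 \<and>
        hom_comp g1 g = hom_comp g2 g \<longrightarrow> g1 = g2)"

end

theory Submission
  imports Defs "Jordan_Normal_Form.Gauss_Jordan_Elimination"
begin

text \<open>Vertexwise injective (surjective) matrices are left (right) cancellable, which gives one
direction of both equivalences. Conversely, if g is not injective at some vertex, push a kernel
vector of g forward along the arrows until the next push would kill it; acyclicity makes this
terminate in a nonzero kernel vector Y at a vertex j annihilated by every arrow out of j.
Adjoining to V a one-dimensional space with zero arrows at each vertex gives an object of R(P,I),
and the maps [1 | y] and [1 | 0] from it to (V,f,h), with y equal to Y at j and 0 elsewhere, are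
distinct morphisms of R(P,I) (h Y = h' g Y = 0) with the same composite with g. Dually, a nonzero
row vector Y with Y g = 0 that annihilates all arrows into its vertex gives two distinct maps
[1; y] and [1; 0] out of (V',f',h') with the same composite with g.\<close>

section \<open>Injectivity and surjectivity of matrices\<close>

lemma eq_mat_by_mult_vecI:
  fixes A B :: "'a::comm_ring_1 mat"
  assumes A: "A \<in> carrier_mat m n" and B: "B \<in> carrier_mat m n"
    and eq: "\<And>v. v \<in> carrier_vec n \<Longrightarrow> A *\<^sub>v v = B *\<^sub>v v"
  shows "A = B"
proof (rule eq_matI)
  fix i j assume i: "i < dim_row B" and j: "j < dim_col B"
  have "A $$ (i, j) = (A *\<^sub>v unit_vec n j) $ i" using A B i j by simp
  also have "\<dots> = (B *\<^sub>v unit_vec n j) $ i" using eq[of "unit_vec n j"] by simp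
  also have "\<dots> = B $$ (i, j)" using B i j by simp
  finally show "A $$ (i, j) = B $$ (i, j)" .
qed (use A B in auto)

lemma mat_inj_mult_left_cancel:
  assumes A: "A \<in> carrier_mat m n" and inj: "mat_inj A"
    and B1: "B1 \<in> carrier_mat n k" and B2: "B2 \<in> carrier_mat n k"
    and eq: "A * B1 = A * B2"
  shows "B1 = B2"
proof (rule mat_col_eqI)
  fix j assume j: "j < dim_col B2"
  have "A *\<^sub>v col B1 j = A *\<^sub>v col B2 j"
    using col_mult2[OF A B1, of j] col_mult2[OF A B2, of j] eq B2 j by simp
  then show "col B1 j = col B2 j" using inj A B1 B2 j unfolding mat_inj_def by auto
qed (use B1 B2 in auto)

lemma mat_surj_mult_right_cancel:
  assumes A: "A \<in> carrier_mat m n" and surj: "mat_surj A"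
    and B1: "B1 \<in> carrier_mat k m" and B2: "B2 \<in> carrier_mat k m"
    and eq: "B1 * A = B2 * A"
  shows "B1 = B2"
proof (rule eq_mat_by_mult_vecI[OF B1 B2])
  fix y :: "complex vec" assume "y \<in> carrier_vec m"
  then obtain x where x: "x \<in> carrier_vec n" and y: "y = A *\<^sub>v x"
    using surj A unfolding mat_surj_def by auto
  have "B1 *\<^sub>v y = (B1 * A) *\<^sub>v x" using A B1 x y by (simp add: assoc_mult_mat_vec)
  also have "\<dots> = B2 *\<^sub>v y" unfolding eq using A B2 x y by (simp add: assoc_mult_mat_vec)
  finally show "B1 *\<^sub>v y = B2 *\<^sub>v y" .
qed

lemma not_mat_inj_kernel_col:
  assumes A: "A \<in> carrier_mat m n" and not_inj: "\<not> mat_inj A"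
  shows "\<exists>Y \<in> carrier_mat n 1. Y \<noteq> 0\<^sub>m n 1 \<and> A * Y = 0\<^sub>m m 1"
proof -
  obtain x y where x: "x \<in> carrier_vec n" and y: "y \<in> carrier_vec n"
    and Axy: "A *\<^sub>v x = A *\<^sub>v y" and "x \<noteq> y"
    using not_inj A unfolding mat_inj_def by auto
  define Y where "Y = mat_of_cols n [x - y]"
  have Y: "Y \<in> carrier_mat n 1" unfolding Y_def using mat_of_cols_carrier(1)[of n "[x - y]"] by simp
  have col_Y: "col Y 0 = x - y" unfolding Y_def using x y by simp
  moreover have "x - y \<noteq> 0\<^sub>v n"
  proof
    assume diff: "x - y = 0\<^sub>v n"
    have "x $ i = y $ i" if "i < n" for i
      using arg_cong[OF diff, of "\<lambda>v. v $ i"] x y that by simp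
    with \<open>x \<noteq> y\<close> x y show False by (metis carrier_vecD eq_vecI)
  qed
  ultimately have "Y \<noteq> 0\<^sub>m n 1" by auto
  moreover have "A * Y = 0\<^sub>m m 1"
  proof (rule mat_col_eqI)
    have "col (A * Y) 0 = A *\<^sub>v (x - y)" using col_mult2[OF A Y] col_Y by simp
    also have "\<dots> = 0\<^sub>v m" using A x y Axy by (simp add: mult_minus_distrib_mat_vec)
    finally show "col (A * Y) j = col (0\<^sub>m m 1) j" if "j < dim_col (0\<^sub>m m 1 :: complex mat)" for j
      using that by simp
  qed (use A Y in auto)
  ultimately show ?thesis using Y by blast
qed

lemma pivot_fun_right_inverse:
  fixes C :: "'a::field mat"
  assumes C: "C \<in> carrier_mat m n" and piv: "pivot_fun C p n"
    and no_zero_row: "\<And>i. i < m \<Longrightarrow> p i < n"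
  shows "\<exists>X \<in> carrier_mat n m. C * X = 1\<^sub>m m"
proof -
  define X :: "'a mat" where "X = mat n m (\<lambda>(r, k). if r = p k then 1 else 0)"
  have X: "X \<in> carrier_mat n m" unfolding X_def by simp
  note pivot = pivot_funD[OF carrier_matD(1)[OF C] piv]
  have "C * X = 1\<^sub>m m"
  proof (rule eq_matI)
    fix i k assume "i < dim_row (1\<^sub>m m :: 'a mat)" and "k < dim_col (1\<^sub>m m :: 'a mat)"
    then have i: "i < m" and k: "k < m" by auto
    have "(C * X) $$ (i, k) = row C i \<bullet> col X k" using C X i k by simp
    also have "\<dots> = (\<Sum>r = 0..<n. C $$ (i, r) * (if r = p k then 1 else 0))"
      unfolding scalar_prod_def using C X i k by (intro sum.cong) (simp_all add: X_def)
    also have "\<dots> = (\<Sum>r = 0..<n. if r = p k then C $$ (i, r) else 0)"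
      by (rule sum.cong) auto
    also have "\<dots> = C $$ (i, p k)" using no_zero_row[OF k] by simp
    also have "\<dots> = (if i = k then 1 else 0)"
      using pivot(4)[OF k no_zero_row[OF k]] pivot(5)[OF k no_zero_row[OF k] i] by auto
    finally show "(C * X) $$ (i, k) = 1\<^sub>m m $$ (i, k)" using i k by simp
  qed (use C X in auto)
  with X show ?thesis by blast
qed

lemma mat_surj_if_right_inverse:
  assumes A: "A \<in> carrier_mat m n" and B: "B \<in> carrier_mat n m" and AB: "A * B = 1\<^sub>m m"
  shows "mat_surj A"
  unfolding mat_surj_def
proof
  fix y :: "complex vec" assume "y \<in> carrier_vec (dim_row A)"
  then have y: "y \<in> carrier_vec m" using A by simp
  have "A *\<^sub>v (B *\<^sub>v y) = y" using A B y AB by (simp flip: assoc_mult_mat_vec)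
  then show "\<exists>x \<in> carrier_vec (dim_col A). A *\<^sub>v x = y"
    using A B y by (intro bexI[of _ "B *\<^sub>v y"]) auto
qed

lemma not_mat_surj_left_kernel_row:
  assumes A: "A \<in> carrier_mat m n" and not_surj: "\<not> mat_surj A"
  shows "\<exists>Y \<in> carrier_mat 1 m. Y \<noteq> 0\<^sub>m 1 m \<and> Y * A = 0\<^sub>m 1 n"
proof -
  define C where "C = gauss_jordan_single A"
  note gj = gauss_jordan_single[OF A C_def[symmetric]]
  have C: "C \<in> carrier_mat m n" using gj(2) .
  obtain P Q where CPA: "C = P * A" and P: "P \<in> carrier_mat m m" and Q: "Q \<in> carrier_mat m m"
    and PQ: "P * Q = 1\<^sub>m m" and QP: "Q * P = 1\<^sub>m m" using gj(4) by blast
  obtain p where piv: "pivot_fun C p n" using gj(3) C unfolding row_echelon_form_def by auto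
  have "\<exists>i < m. p i = n"
  proof (rule ccontr)
    assume "\<not> (\<exists>i < m. p i = n)"
    then have "\<And>i. i < m \<Longrightarrow> p i < n"
      using pivot_funD(1)[OF carrier_matD(1)[OF C] piv] by (meson le_neq_implies_less)
    then obtain X where X: "X \<in> carrier_mat n m" and CX: "C * X = 1\<^sub>m m"
      using pivot_fun_right_inverse[OF C piv] by blast
    have "A = Q * C" unfolding CPA using A P Q QP by (simp flip: assoc_mult_mat)
    then have "A * (X * P) = Q * ((C * X) * P)"
      using Q C X P by (simp add: assoc_mult_mat[of _ m m _ n _ m])
    also have "\<dots> = 1\<^sub>m m" unfolding CX using P Q QP by simp
    finally have "mat_surj A" by (rule mat_surj_if_right_inverse[OF A mult_carrier_mat[OF X P]])
    with not_surj show False ..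
  qed
  then obtain i where i: "i < m" and zero_row: "row C i = 0\<^sub>v n"
    using pivot_fun_zero_row_iff[OF piv C] by blast
  define Y where "Y = mat 1 m (\<lambda>(_, c). P $$ (i, c))"
  have Y: "Y \<in> carrier_mat 1 m" unfolding Y_def by simp
  have row_Y: "row Y 0 = row P i" unfolding Y_def using P i by (auto intro!: eq_vecI)
  have "Y * A = 0\<^sub>m 1 n"
  proof (rule eq_matI)
    fix a c assume "a < dim_row (0\<^sub>m 1 n :: complex mat)" and c: "c < dim_col (0\<^sub>m 1 n :: complex mat)"
    then have "(Y * A) $$ (a, c) = row C i $ c"
      unfolding CPA using Y A P i row_Y by simp
    then show "(Y * A) $$ (a, c) = 0\<^sub>m 1 n $$ (a, c)" using c \<open>a < _\<close> unfolding zero_row by simp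
  qed (use Y A in auto)
  moreover have "Y \<noteq> 0\<^sub>m 1 m"
  proof
    assume "Y = 0\<^sub>m 1 m"
    then have "row P i = 0\<^sub>v m" using row_Y by (auto intro!: eq_vecI)
    then have "(P * Q) $$ (i, i) = 0" using P Q i by simp
    then show False unfolding PQ using i by simp
  qed
  ultimately show ?thesis using Y by blast
qed

section \<open>Block matrices\<close>

definition append_cols :: "'a::zero mat \<Rightarrow> 'a mat \<Rightarrow> 'a mat" where
  "append_cols A B = four_block_mat A B (0\<^sub>m 0 (dim_col A)) (0\<^sub>m 0 (dim_col B))"

lemma carrier_append_cols [simp, intro]:
  "A \<in> carrier_mat nr nc1 \<Longrightarrow> B \<in> carrier_mat nr nc2 \<Longrightarrow>
   append_cols A B \<in> carrier_mat nr (nc1 + nc2)"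
  unfolding append_cols_def by (metis add.right_neutral carrier_matD(2) four_block_carrier_mat zero_carrier_mat)

lemma mat_without_rows: "(A :: 'a::zero mat) \<in> carrier_mat 0 nc \<Longrightarrow> A = 0\<^sub>m 0 nc"
  by (rule eq_matI) auto

lemma mat_without_cols: "(A :: 'a::zero mat) \<in> carrier_mat nr 0 \<Longrightarrow> A = 0\<^sub>m nr 0"
  by (rule eq_matI) auto

lemma four_block_mat_empty_blocks:
  "(A :: 'a::zero mat) \<in> carrier_mat nr nc \<Longrightarrow>
   four_block_mat A (0\<^sub>m nr 0) (0\<^sub>m 0 nc) (0\<^sub>m 0 0) = A"
  by (rule eq_matI) auto

lemma add_zero_mat_dims [simp]:
  fixes A :: "'a::monoid_add mat"
  shows "dim_row A = nr \<Longrightarrow> dim_col A = nc \<Longrightarrow> A + 0\<^sub>m nr nc = A"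
    and "dim_row A = nr \<Longrightarrow> dim_col A = nc \<Longrightarrow> 0\<^sub>m nr nc + A = A"
  by (auto intro: right_add_zero_mat left_add_zero_mat carrier_matI)

lemma mult_append_cols:
  fixes A :: "'a::semiring_0 mat"
  assumes A: "A \<in> carrier_mat nr n" and B: "B \<in> carrier_mat n nc1" and C: "C \<in> carrier_mat n nc2"
  shows "A * append_cols B C = append_cols (A * B) (A * C)"
proof -
  have "A * append_cols B C
      = four_block_mat A (0\<^sub>m nr 0) (0\<^sub>m 0 n) (0\<^sub>m 0 0) *
        four_block_mat B C (0\<^sub>m 0 nc1) (0\<^sub>m 0 nc2)"
    unfolding append_cols_def four_block_mat_empty_blocks[OF A] using B C by auto
  also have "\<dots> = four_block_mat (A * B) (A * C) (0\<^sub>m 0 nc1) (0\<^sub>m 0 nc2)"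
    using A B C by (subst mult_four_block_mat) (auto intro!: cong_four_block_mat mat_without_rows)
  also have "\<dots> = append_cols (A * B) (A * C)" unfolding append_cols_def using A B C by simp
  finally show ?thesis .
qed

lemma append_rows_mult:
  fixes A :: "'a::semiring_0 mat"
  assumes A: "A \<in> carrier_mat n nc" and B: "B \<in> carrier_mat nr1 n" and C: "C \<in> carrier_mat nr2 n"
  shows "(B @\<^sub>r C) * A = (B * A) @\<^sub>r (C * A)"
proof -
  have "(B @\<^sub>r C) * A
      = four_block_mat B (0\<^sub>m nr1 0) C (0\<^sub>m nr2 0) *
        four_block_mat A (0\<^sub>m n 0) (0\<^sub>m 0 nc) (0\<^sub>m 0 0)"
    unfolding append_rows_def four_block_mat_empty_blocks[OF A] using B C by auto
  also have "\<dots> = four_block_mat (B * A) (0\<^sub>m nr1 0) (C * A) (0\<^sub>m nr2 0)"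
    using A B C by (subst mult_four_block_mat) (auto intro!: cong_four_block_mat mat_without_cols)
  also have "\<dots> = (B * A) @\<^sub>r (C * A)" unfolding append_rows_def using A B C by simp
  finally show ?thesis .
qed

lemma append_cols_mult_append_rows:
  fixes B :: "'a::semiring_0 mat"
  assumes B: "B \<in> carrier_mat nr n1" and C: "C \<in> carrier_mat nr n2"
    and D: "D \<in> carrier_mat n1 nc" and E: "E \<in> carrier_mat n2 nc"
  shows "append_cols B C * (D @\<^sub>r E) = B * D + C * E"
proof -
  have "append_cols B C * (D @\<^sub>r E)
      = four_block_mat B C (0\<^sub>m 0 n1) (0\<^sub>m 0 n2) * four_block_mat D (0\<^sub>m n1 0) E (0\<^sub>m n2 0)"
    unfolding append_cols_def append_rows_def using B C D E by auto
  also have "\<dots> = four_block_mat (B * D + C * E) (0\<^sub>m nr 0) (0\<^sub>m 0 nc) (0\<^sub>m 0 0)"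
    using B C D E by (subst mult_four_block_mat)
      (auto intro!: cong_four_block_mat mat_without_rows mat_without_cols)
  also have "\<dots> = B * D + C * E" using B C D E by (intro four_block_mat_empty_blocks) auto
  finally show ?thesis .
qed

lemma append_cols_mult_four_block_mat:
  fixes B :: "'a::semiring_0 mat"
  assumes B: "B \<in> carrier_mat nr n1" and C: "C \<in> carrier_mat nr n2"
    and D1: "D1 \<in> carrier_mat n1 k1" and D2: "D2 \<in> carrier_mat n1 k2"
    and D3: "D3 \<in> carrier_mat n2 k1" and D4: "D4 \<in> carrier_mat n2 k2"
  shows "append_cols B C * four_block_mat D1 D2 D3 D4 = append_cols (B * D1 + C * D3) (B * D2 + C * D4)"
  unfolding append_cols_def using B C D1 D2 D3 D4
  by (subst mult_four_block_mat) (auto intro!: cong_four_block_mat mat_without_rows)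

lemma four_block_mat_mult_append_rows:
  fixes B :: "'a::semiring_0 mat"
  assumes B: "B \<in> carrier_mat n1 k" and C: "C \<in> carrier_mat n2 k"
    and D1: "D1 \<in> carrier_mat r1 n1" and D2: "D2 \<in> carrier_mat r1 n2"
    and D3: "D3 \<in> carrier_mat r2 n1" and D4: "D4 \<in> carrier_mat r2 n2"
  shows "four_block_mat D1 D2 D3 D4 * (B @\<^sub>r C) = (D1 * B + D2 * C) @\<^sub>r (D3 * B + D4 * C)"
  unfolding append_rows_def using B C D1 D2 D3 D4
  by (subst mult_four_block_mat) (auto intro!: cong_four_block_mat mat_without_cols)

lemma append_cols_eq_imp_right_eq:
  assumes "B \<in> carrier_mat nr n1" and "B' \<in> carrier_mat nr n1"
    and C: "C \<in> carrier_mat nr n2" and C': "C' \<in> carrier_mat nr n2"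
    and eq: "append_cols B C = append_cols B' C'"
  shows "C = C'"
proof (rule eq_matI)
  fix i j assume "i < dim_row C'" and "j < dim_col C'"
  then have "append_cols B C $$ (i, n1 + j) = C $$ (i, j)"
    and "append_cols B' C' $$ (i, n1 + j) = C' $$ (i, j)"
    using assms(1-4) unfolding append_cols_def by simp_all
  with eq show "C $$ (i, j) = C' $$ (i, j)" by simp
qed (use C C' in auto)

lemma append_rows_eq_imp_bottom_eq:
  assumes "B \<in> carrier_mat n1 nc" and "B' \<in> carrier_mat n1 nc"
    and C: "C \<in> carrier_mat n2 nc" and C': "C' \<in> carrier_mat n2 nc"
    and eq: "B @\<^sub>r C = B' @\<^sub>r C'"
  shows "C = C'"
proof (rule eq_matI)
  fix i j assume "i < dim_row C'" and "j < dim_col C'"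
  then have "(B @\<^sub>r C) $$ (n1 + i, j) = C $$ (i, j)"
    and "(B' @\<^sub>r C') $$ (n1 + i, j) = C' $$ (i, j)"
    using assms(1-4) unfolding append_rows_def by simp_all
  with eq show "C $$ (i, j) = C' $$ (i, j)" by simp
qed (use C C' in auto)

section \<open>Annihilated kernel vectors over an acyclic quiver\<close>

lemma acyclic_quiver_swap: "acyclic_quiver tgt src \<longleftrightarrow> acyclic_quiver src tgt"
proof -
  have "{(tgt a, src a) | a. True} = {(src a, tgt a) | a. True}\<inverse>" by blast
  then show ?thesis unfolding acyclic_quiver_def by simp
qed

lemma acyclic_quiver_terminal_witness:
  fixes src tgt :: "'e \<Rightarrow> 'v::finite"
  assumes acyc: "acyclic_quiver src tgt" and start: "Q i x"
  shows "\<exists>j y. Q j y \<and> (\<forall>a. src a = j \<longrightarrow> \<not> Q (tgt a) (push a y))"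
proof -
  let ?r = "{(src a, tgt a) | a. True}"
  have "wf (?r\<inverse>)"
    using acyc unfolding acyclic_quiver_def by (intro finite_acyclic_wf_converse) auto
  then show ?thesis using start
  proof (induction i arbitrary: x rule: wf_induct_rule)
    case (less i)
    show ?case
    proof (cases "\<exists>a. src a = i \<and> Q (tgt a) (push a x)")
      case True
      then obtain a where "src a = i" and "Q (tgt a) (push a x)" by blast
      moreover have "(tgt a, i) \<in> ?r\<inverse>" using \<open>src a = i\<close> by blast
      ultimately show ?thesis using less.IH by blast
    next
      case False
      with less.prems show ?thesis by blast
    qed
  qed
qed

lemma rep_amap_carrier:
  assumes "is_rep src tgt V"
  shows "amap V a \<in> carrier_mat (dimv V (tgt a)) (dimv V (src a))"
  using assms unfolding is_rep_def by blast

lemma rep_hom_carrier: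
  assumes "rep_hom src tgt V W g"
  shows "g i \<in> carrier_mat (dimv W i) (dimv V i)"
  using assms unfolding rep_hom_def by blast

lemma rep_hom_commutes:
  assumes "rep_hom src tgt V W g"
  shows "g (tgt a) * amap V a = amap W a * g (src a)"
  using assms unfolding rep_hom_def by blast

lemma kernel_col_annihilated_by_arrows:
  fixes src tgt :: "'e \<Rightarrow> 'v::finite"
  assumes acyc: "acyclic_quiver src tgt" and V: "is_rep src tgt V" and V': "is_rep src tgt V'"
    and g: "rep_hom src tgt V V' g" and not_inj: "\<not> mat_inj (g i)"
  shows "\<exists>j Y. Y \<in> carrier_mat (dimv V j) 1 \<and> Y \<noteq> 0\<^sub>m (dimv V j) 1 \<and>
           g j * Y = 0\<^sub>m (dimv V' j) 1 \<and>
           (\<forall>a. src a = j \<longrightarrow> amap V a * Y = 0\<^sub>m (dimv V (tgt a)) 1)"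
proof -
  define Q where "Q j Y \<longleftrightarrow>
    Y \<in> carrier_mat (dimv V j) 1 \<and> Y \<noteq> 0\<^sub>m (dimv V j) 1 \<and> g j * Y = 0\<^sub>m (dimv V' j) 1"
    for j Y
  have "\<exists>Y. Q i Y"
    unfolding Q_def using not_mat_inj_kernel_col[OF rep_hom_carrier[OF g] not_inj] by blast
  then obtain j Y where QY: "Q j Y"
    and terminal: "\<And>a. src a = j \<Longrightarrow> \<not> Q (tgt a) (amap V a * Y)"
    using acyclic_quiver_terminal_witness[OF acyc, of Q _ _ "\<lambda>a Y. amap V a * Y"] by blast
  have "amap V a * Y = 0\<^sub>m (dimv V (tgt a)) 1" if a: "src a = j" for a
  proof -
    have Y: "Y \<in> carrier_mat (dimv V (src a)) 1" using QY a unfolding Q_def by simp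
    note A = rep_amap_carrier[OF V, of a] and A' = rep_amap_carrier[OF V', of a]
    note gc = rep_hom_carrier[OF g]
    have "g (tgt a) * (amap V a * Y) = (g (tgt a) * amap V a) * Y"
      by (rule assoc_mult_mat[OF gc A Y, symmetric])
    also have "\<dots> = amap V' a * (g (src a) * Y)"
      unfolding rep_hom_commutes[OF g] by (rule assoc_mult_mat[OF A' gc Y])
    also have "\<dots> = 0\<^sub>m (dimv V' (tgt a)) 1" using QY a A' unfolding Q_def by simp
    finally show ?thesis using terminal[OF a] A Y unfolding Q_def by auto
  qed
  with QY show ?thesis unfolding Q_def by blast
qed

lemma cokernel_row_annihilated_by_arrows:
  fixes src tgt :: "'e \<Rightarrow> 'v::finite"
  assumes acyc: "acyclic_quiver src tgt" and V: "is_rep src tgt V" and V': "is_rep src tgt V'"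
    and g: "rep_hom src tgt V V' g" and not_surj: "\<not> mat_surj (g i)"
  shows "\<exists>j Y. Y \<in> carrier_mat 1 (dimv V' j) \<and> Y \<noteq> 0\<^sub>m 1 (dimv V' j) \<and>
           Y * g j = 0\<^sub>m 1 (dimv V j) \<and>
           (\<forall>a. tgt a = j \<longrightarrow> Y * amap V' a = 0\<^sub>m 1 (dimv V' (src a)))"
proof -
  define Q where "Q j Y \<longleftrightarrow>
    Y \<in> carrier_mat 1 (dimv V' j) \<and> Y \<noteq> 0\<^sub>m 1 (dimv V' j) \<and> Y * g j = 0\<^sub>m 1 (dimv V j)"
    for j Y
  have "\<exists>Y. Q i Y"
    unfolding Q_def using not_mat_surj_left_kernel_row[OF rep_hom_carrier[OF g] not_surj] by blast
  then obtain j Y where QY: "Q j Y"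
    and terminal: "\<And>a. tgt a = j \<Longrightarrow> \<not> Q (src a) (Y * amap V' a)"
    using acyclic_quiver_terminal_witness[of tgt src, OF acyclic_quiver_swap[THEN iffD2, OF acyc],
        of Q _ _ "\<lambda>a Y. Y * amap V' a"]
    by blast
  have "Y * amap V' a = 0\<^sub>m 1 (dimv V' (src a))" if a: "tgt a = j" for a
  proof -
    have Y: "Y \<in> carrier_mat 1 (dimv V' (tgt a))" using QY a unfolding Q_def by simp
    note A = rep_amap_carrier[OF V, of a] and A' = rep_amap_carrier[OF V', of a]
    note gc = rep_hom_carrier[OF g]
    have "(Y * amap V' a) * g (src a) = Y * (amap V' a * g (src a))"
      by (rule assoc_mult_mat[OF Y A' gc])
    also have "\<dots> = (Y * g (tgt a)) * amap V a"
      unfolding rep_hom_commutes[OF g, symmetric] by (rule assoc_mult_mat[OF Y gc A, symmetric])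
    also have "\<dots> = 0\<^sub>m 1 (dimv V (src a))" using QY a A unfolding Q_def by simp
    finally show ?thesis using terminal[OF a] A' Y unfolding Q_def by auto
  qed
  with QY show ?thesis unfolding Q_def by blast
qed

section \<open>Adjoining simple representations\<close>

text \<open>The direct sum of V with all simple representations: one extra coordinate at every vertex,
on which all arrows act by zero.\<close>

definition plus_simples :: "('v, 'e) qrep \<Rightarrow> ('v, 'e) qrep" where
  "plus_simples V = \<lparr>dimv = (\<lambda>i. dimv V i + 1),
     amap = (\<lambda>a. four_block_mat (amap V a)
       (0\<^sub>m (dim_row (amap V a)) 1) (0\<^sub>m 1 (dim_col (amap V a))) (0\<^sub>m 1 1))\<rparr>"

lemma plus_simples_simps [simp]:
  "dimv (plus_simples V) i = dimv V i + 1"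
  "amap (plus_simples V) a =
     four_block_mat (amap V a) (0\<^sub>m (dim_row (amap V a)) 1) (0\<^sub>m 1 (dim_col (amap V a))) (0\<^sub>m 1 1)"
  unfolding plus_simples_def by simp_all

type_synonym ('v, 'e) R_object =
  "('v, 'e) qrep \<times> ('v \<Rightarrow> complex mat) \<times> ('v \<Rightarrow> complex mat)"

fun plus_simples_obj :: "('v, 'e) R_object \<Rightarrow> ('v, 'e) R_object" where
  "plus_simples_obj (V, f, h) =
     (plus_simples V, \<lambda>i. f i @\<^sub>r 0\<^sub>m 1 (dim_col (f i)),
      \<lambda>i. append_cols (h i) (0\<^sub>m (dim_row (h i)) 1))"

lemma R_obj_plus_simples_obj:
  assumes P: "is_rep src tgt P" and I: "is_rep src tgt I" and X: "R_obj src tgt P I (V, f, h)"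
  shows "R_obj src tgt P I (plus_simples_obj (V, f, h))"
proof -
  from X have V: "is_rep src tgt V" and f: "rep_hom src tgt P V f" and h: "rep_hom src tgt V I h"
    unfolding R_obj_def by auto
  note AV = rep_amap_carrier[OF V] and AP = rep_amap_carrier[OF P] and AI = rep_amap_carrier[OF I]
  note fc = rep_hom_carrier[OF f] and hc = rep_hom_carrier[OF h]
  note dims [simp] = carrier_matD[OF AV] carrier_matD[OF AP] carrier_matD[OF AI]
    carrier_matD[OF fc] carrier_matD[OF hc]
  have "is_rep src tgt (plus_simples V)"
    unfolding is_rep_def using AV by (auto intro: four_block_carrier_mat)
  moreover have "rep_hom src tgt P (plus_simples V) (\<lambda>i. f i @\<^sub>r 0\<^sub>m 1 (dim_col (f i)))"
    unfolding rep_hom_def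
  proof (intro conjI allI)
    fix i show "f i @\<^sub>r 0\<^sub>m 1 (dim_col (f i)) \<in> carrier_mat (dimv (plus_simples V) i) (dimv P i)"
      unfolding plus_simples_simps using fc[of i] by (intro carrier_append_rows) auto
  next
    fix a
    have "(f (tgt a) @\<^sub>r 0\<^sub>m 1 (dim_col (f (tgt a)))) * amap P a
        = (amap V a * f (src a)) @\<^sub>r 0\<^sub>m 1 (dimv P (src a))"
      using rep_hom_commutes[OF f, of a] by (simp add: append_rows_mult[OF AP fc zero_carrier_mat])
    also have "\<dots> = amap (plus_simples V) a * (f (src a) @\<^sub>r 0\<^sub>m 1 (dim_col (f (src a))))"
      by (simp add: four_block_mat_mult_append_rows[OF fc zero_carrier_mat AV zero_carrier_mat
          zero_carrier_mat zero_carrier_mat])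
    finally show "(f (tgt a) @\<^sub>r 0\<^sub>m 1 (dim_col (f (tgt a)))) * amap P a =
      amap (plus_simples V) a * (f (src a) @\<^sub>r 0\<^sub>m 1 (dim_col (f (src a))))" .
  qed
  moreover have "rep_hom src tgt (plus_simples V) I (\<lambda>i. append_cols (h i) (0\<^sub>m (dim_row (h i)) 1))"
    unfolding rep_hom_def
  proof (intro conjI allI)
    fix i
    show "append_cols (h i) (0\<^sub>m (dim_row (h i)) 1) \<in> carrier_mat (dimv I i) (dimv (plus_simples V) i)"
      unfolding plus_simples_simps using hc[of i] by (intro carrier_append_cols) auto
  next
    fix a
    have "append_cols (h (tgt a)) (0\<^sub>m (dim_row (h (tgt a))) 1) * amap (plus_simples V) a
        = append_cols (h (tgt a) * amap V a) (0\<^sub>m (dimv I (tgt a)) 1)"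
      by (simp add: append_cols_mult_four_block_mat[OF hc zero_carrier_mat AV zero_carrier_mat
          zero_carrier_mat zero_carrier_mat])
    also have "\<dots> = amap I a * append_cols (h (src a)) (0\<^sub>m (dim_row (h (src a))) 1)"
      using rep_hom_commutes[OF h, of a] by (simp add: mult_append_cols[OF AI hc zero_carrier_mat])
    finally show "append_cols (h (tgt a)) (0\<^sub>m (dim_row (h (tgt a))) 1) * amap (plus_simples V) a =
      amap I a * append_cols (h (src a)) (0\<^sub>m (dim_row (h (src a))) 1)" .
  qed
  ultimately show ?thesis unfolding R_obj_def by simp
qed

lemma R_mor_from_plus_simples_obj:
  assumes P: "is_rep src tgt P" and I: "is_rep src tgt I" and X: "R_obj src tgt P I (V, f, h)"
    and y: "\<And>i. y i \<in> carrier_mat (dimv V i) 1"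
    and y_arrows: "\<And>a. amap V a * y (src a) = 0\<^sub>m (dimv V (tgt a)) 1"
    and y_h: "\<And>i. h i * y i = 0\<^sub>m (dimv I i) 1"
  shows "R_mor src tgt P I (plus_simples_obj (V, f, h)) (V, f, h)
           (\<lambda>i. append_cols (1\<^sub>m (dimv V i)) (y i))"
proof -
  from X have V: "is_rep src tgt V" and f: "rep_hom src tgt P V f" and h: "rep_hom src tgt V I h"
    unfolding R_obj_def by auto
  note AV = rep_amap_carrier[OF V] and fc = rep_hom_carrier[OF f] and hc = rep_hom_carrier[OF h]
  note dims [simp] = carrier_matD[OF AV] carrier_matD[OF fc] carrier_matD[OF hc] carrier_matD[OF y]
  have "rep_hom src tgt (plus_simples V) V (\<lambda>i. append_cols (1\<^sub>m (dimv V i)) (y i))"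
    unfolding rep_hom_def
  proof (intro conjI allI)
    fix i show "append_cols (1\<^sub>m (dimv V i)) (y i) \<in> carrier_mat (dimv V i) (dimv (plus_simples V) i)"
      unfolding plus_simples_simps by (rule carrier_append_cols[OF one_carrier_mat y])
  next
    fix a
    have "append_cols (1\<^sub>m (dimv V (tgt a))) (y (tgt a)) * amap (plus_simples V) a
        = append_cols (amap V a) (0\<^sub>m (dimv V (tgt a)) 1)"
      unfolding plus_simples_simps carrier_matD[OF AV]
      by (subst append_cols_mult_four_block_mat[OF one_carrier_mat y AV zero_carrier_mat
          zero_carrier_mat zero_carrier_mat])
        simp
    also have "\<dots> = amap V a * append_cols (1\<^sub>m (dimv V (src a))) (y (src a))"
      by (simp add: mult_append_cols[OF AV one_carrier_mat y] y_arrows)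
    finally show "append_cols (1\<^sub>m (dimv V (tgt a))) (y (tgt a)) * amap (plus_simples V) a
        = amap V a * append_cols (1\<^sub>m (dimv V (src a))) (y (src a))" .
  qed
  moreover have "append_cols (1\<^sub>m (dimv V i)) (y i) * (f i @\<^sub>r 0\<^sub>m 1 (dim_col (f i))) = f i" for i
    unfolding carrier_matD[OF fc]
    by (subst append_cols_mult_append_rows[OF one_carrier_mat y fc zero_carrier_mat]) simp
  moreover have "h i * append_cols (1\<^sub>m (dimv V i)) (y i) = append_cols (h i) (0\<^sub>m (dim_row (h i)) 1)"
    for i
    by (simp add: mult_append_cols[OF hc one_carrier_mat y] y_h)
  ultimately show ?thesis
    using R_obj_plus_simples_obj[OF P I X] X unfolding R_mor_def hom_comp_def by auto
qed

lemma R_mor_to_plus_simples_obj: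
  assumes P: "is_rep src tgt P" and I: "is_rep src tgt I" and X: "R_obj src tgt P I (V, f, h)"
    and y: "\<And>i. y i \<in> carrier_mat 1 (dimv V i)"
    and y_arrows: "\<And>a. y (tgt a) * amap V a = 0\<^sub>m 1 (dimv V (src a))"
    and y_f: "\<And>i. y i * f i = 0\<^sub>m 1 (dimv P i)"
  shows "R_mor src tgt P I (V, f, h) (plus_simples_obj (V, f, h)) (\<lambda>i. 1\<^sub>m (dimv V i) @\<^sub>r y i)"
proof -
  from X have V: "is_rep src tgt V" and f: "rep_hom src tgt P V f" and h: "rep_hom src tgt V I h"
    unfolding R_obj_def by auto
  note AV = rep_amap_carrier[OF V] and fc = rep_hom_carrier[OF f] and hc = rep_hom_carrier[OF h]
  note dims [simp] = carrier_matD[OF AV] carrier_matD[OF fc] carrier_matD[OF hc] carrier_matD[OF y]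
  have "rep_hom src tgt V (plus_simples V) (\<lambda>i. 1\<^sub>m (dimv V i) @\<^sub>r y i)"
    unfolding rep_hom_def
  proof (intro conjI allI)
    fix i show "1\<^sub>m (dimv V i) @\<^sub>r y i \<in> carrier_mat (dimv (plus_simples V) i) (dimv V i)"
      unfolding plus_simples_simps by (rule carrier_append_rows[OF one_carrier_mat y])
  next
    fix a
    have "(1\<^sub>m (dimv V (tgt a)) @\<^sub>r y (tgt a)) * amap V a
        = amap V a @\<^sub>r 0\<^sub>m 1 (dimv V (src a))"
      by (simp add: append_rows_mult[OF AV one_carrier_mat y] y_arrows)
    also have "\<dots> = amap (plus_simples V) a * (1\<^sub>m (dimv V (src a)) @\<^sub>r y (src a))"
      unfolding plus_simples_simps carrier_matD[OF AV]
      by (subst four_block_mat_mult_append_rows[OF one_carrier_mat y AV zero_carrier_mat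
          zero_carrier_mat zero_carrier_mat])
        simp
    finally show "(1\<^sub>m (dimv V (tgt a)) @\<^sub>r y (tgt a)) * amap V a
        = amap (plus_simples V) a * (1\<^sub>m (dimv V (src a)) @\<^sub>r y (src a))" .
  qed
  moreover have "(1\<^sub>m (dimv V i) @\<^sub>r y i) * f i = f i @\<^sub>r 0\<^sub>m 1 (dim_col (f i))" for i
    by (simp add: append_rows_mult[OF fc one_carrier_mat y] y_f)
  moreover have "append_cols (h i) (0\<^sub>m (dim_row (h i)) 1) * (1\<^sub>m (dimv V i) @\<^sub>r y i) = h i" for i
    unfolding carrier_matD[OF hc]
    by (subst append_cols_mult_append_rows[OF hc zero_carrier_mat one_carrier_mat y]) simp
  ultimately show ?thesis
    using R_obj_plus_simples_obj[OF P I X] X unfolding R_mor_def hom_comp_def by auto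
qed

lemma R_mono_kernel_cols_vanish:
  assumes P: "is_rep src tgt P" and I: "is_rep src tgt I"
    and mono: "R_mono src tgt P I (V, f, h) (V', f', h') g"
    and y: "\<And>i. y i \<in> carrier_mat (dimv V i) 1"
    and y_arrows: "\<And>a. amap V a * y (src a) = 0\<^sub>m (dimv V (tgt a)) 1"
    and g_y: "\<And>i. g i * y i = 0\<^sub>m (dimv V' i) 1"
  shows "y i = 0\<^sub>m (dimv V i) 1"
proof -
  from mono have X: "R_obj src tgt P I (V, f, h)" and g: "rep_hom src tgt V V' g"
    and h': "rep_hom src tgt V' I h'" and h: "h = hom_comp h' g"
    unfolding R_mono_def R_mor_def R_obj_def by auto
  from X have V: "is_rep src tgt V" and hV: "rep_hom src tgt V I h" unfolding R_obj_def by auto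
  note gc = rep_hom_carrier[OF g]
  have y_h: "h k * y k = 0\<^sub>m (dimv I k) 1" for k
    unfolding h hom_comp_def
    using assoc_mult_mat[OF rep_hom_carrier[OF h'] gc y] g_y rep_hom_carrier[OF h']
    by (simp add: right_mult_zero_mat)
  let ?embed = "\<lambda>z i. append_cols (1\<^sub>m (dimv V i)) (z i)"
  let ?zero = "\<lambda>i. 0\<^sub>m (dimv V i) 1 :: complex mat"
  have "R_mor src tgt P I (plus_simples_obj (V, f, h)) (V, f, h) (?embed y)"
    using R_mor_from_plus_simples_obj[OF P I X y y_arrows y_h] .
  moreover have "R_mor src tgt P I (plus_simples_obj (V, f, h)) (V, f, h) (?embed ?zero)"
    using rep_amap_carrier[OF V] rep_hom_carrier[OF hV]
    by (intro R_mor_from_plus_simples_obj[OF P I X]) (auto simp: right_mult_zero_mat)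
  moreover have "hom_comp g (?embed y) = hom_comp g (?embed ?zero)"
    unfolding hom_comp_def
  proof (rule ext)
    fix k
    show "g k * ?embed y k = g k * ?embed ?zero k"
      using mult_append_cols[OF gc one_carrier_mat y, of k]
        mult_append_cols[OF gc one_carrier_mat zero_carrier_mat, of k] g_y carrier_matD[OF gc]
      by simp
  qed
  ultimately have "?embed y = ?embed ?zero" using mono unfolding R_mono_def by blast
  then have "?embed y i = ?embed ?zero i" by (rule fun_cong)
  then show ?thesis by (rule append_cols_eq_imp_right_eq[OF one_carrier_mat one_carrier_mat y zero_carrier_mat])
qed

lemma R_epi_cokernel_rows_vanish:
  assumes P: "is_rep src tgt P" and I: "is_rep src tgt I"
    and epi: "R_epi src tgt P I (V, f, h) (V', f', h') g"
    and y: "\<And>i. y i \<in> carrier_mat 1 (dimv V' i)"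
    and y_arrows: "\<And>a. y (tgt a) * amap V' a = 0\<^sub>m 1 (dimv V' (src a))"
    and y_g: "\<And>i. y i * g i = 0\<^sub>m 1 (dimv V i)"
  shows "y i = 0\<^sub>m 1 (dimv V' i)"
proof -
  from epi have X': "R_obj src tgt P I (V', f', h')" and g: "rep_hom src tgt V V' g"
    and f: "rep_hom src tgt P V f" and f': "f' = hom_comp g f"
    unfolding R_epi_def R_mor_def R_obj_def by auto
  from X' have V': "is_rep src tgt V'" and f'V': "rep_hom src tgt P V' f'" unfolding R_obj_def by auto
  note gc = rep_hom_carrier[OF g]
  have y_f': "y k * f' k = 0\<^sub>m 1 (dimv P k)" for k
    unfolding f' hom_comp_def
    using assoc_mult_mat[OF y gc rep_hom_carrier[OF f], symmetric] y_g rep_hom_carrier[OF f]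
    by (simp add: left_mult_zero_mat)
  let ?embed = "\<lambda>z i. 1\<^sub>m (dimv V' i) @\<^sub>r z i"
  let ?zero = "\<lambda>i. 0\<^sub>m 1 (dimv V' i) :: complex mat"
  have "R_mor src tgt P I (V', f', h') (plus_simples_obj (V', f', h')) (?embed y)"
    using R_mor_to_plus_simples_obj[OF P I X' y y_arrows y_f'] .
  moreover have "R_mor src tgt P I (V', f', h') (plus_simples_obj (V', f', h')) (?embed ?zero)"
    using rep_amap_carrier[OF V'] rep_hom_carrier[OF f'V']
    by (intro R_mor_to_plus_simples_obj[OF P I X']) (auto simp: left_mult_zero_mat)
  moreover have "hom_comp (?embed y) g = hom_comp (?embed ?zero) g"
    unfolding hom_comp_def
  proof (rule ext)
    fix k
    show "?embed y k * g k = ?embed ?zero k * g k"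
      using append_rows_mult[OF gc one_carrier_mat y, of k]
        append_rows_mult[OF gc one_carrier_mat zero_carrier_mat, of k] y_g carrier_matD[OF gc]
      by simp
  qed
  ultimately have "?embed y = ?embed ?zero" using epi unfolding R_epi_def by blast
  then have "?embed y i = ?embed ?zero i" by (rule fun_cong)
  then show ?thesis by (rule append_rows_eq_imp_bottom_eq[OF one_carrier_mat one_carrier_mat y zero_carrier_mat])
qed

section \<open>Monomorphisms and epimorphisms of R(P,I)\<close>

lemma mat_inj_imp_R_mono:
  assumes g: "R_mor src tgt P I (V, f, h) (V', f', h') g" and inj: "\<And>i. mat_inj (g i)"
  shows "R_mono src tgt P I (V, f, h) (V', f', h') g"
  unfolding R_mono_def
proof (intro conjI allI impI)
  fix Z g1 g2
  assume "R_mor src tgt P I Z (V, f, h) g1 \<and> R_mor src tgt P I Z (V, f, h) g2 \<and>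
    hom_comp g g1 = hom_comp g g2"
  moreover obtain W fW hW where Z: "Z = (W, fW, hW)" by (cases Z)
  ultimately have g1: "rep_hom src tgt W V g1" and g2: "rep_hom src tgt W V g2"
    and eq: "\<And>i. g i * g1 i = g i * g2 i"
    unfolding R_mor_def hom_comp_def by (auto dest: fun_cong)
  have "rep_hom src tgt V V' g" using g unfolding R_mor_def by simp
  note gc = rep_hom_carrier[OF this]
  show "g1 = g2"
  proof
    fix i show "g1 i = g2 i"
      by (rule mat_inj_mult_left_cancel[OF gc inj rep_hom_carrier[OF g1] rep_hom_carrier[OF g2] eq])
  qed
qed (rule g)

lemma mat_surj_imp_R_epi:
  assumes g: "R_mor src tgt P I (V, f, h) (V', f', h') g" and surj: "\<And>i. mat_surj (g i)"
  shows "R_epi src tgt P I (V, f, h) (V', f', h') g"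
  unfolding R_epi_def
proof (intro conjI allI impI)
  fix Z g1 g2
  assume "R_mor src tgt P I (V', f', h') Z g1 \<and> R_mor src tgt P I (V', f', h') Z g2 \<and>
    hom_comp g1 g = hom_comp g2 g"
  moreover obtain W fW hW where Z: "Z = (W, fW, hW)" by (cases Z)
  ultimately have g1: "rep_hom src tgt V' W g1" and g2: "rep_hom src tgt V' W g2"
    and eq: "\<And>i. g1 i * g i = g2 i * g i"
    unfolding R_mor_def hom_comp_def by (auto dest: fun_cong)
  have "rep_hom src tgt V V' g" using g unfolding R_mor_def by simp
  note gc = rep_hom_carrier[OF this]
  show "g1 = g2"
  proof
    fix i show "g1 i = g2 i"
      by (rule mat_surj_mult_right_cancel[OF gc surj rep_hom_carrier[OF g1] rep_hom_carrier[OF g2] eq])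
  qed
qed (rule g)

lemma R_mono_imp_mat_inj:
  fixes src tgt :: "'e \<Rightarrow> 'v::finite"
  assumes acyc: "acyclic_quiver src tgt" and P: "is_rep src tgt P" and I: "is_rep src tgt I"
    and mono: "R_mono src tgt P I (V, f, h) (V', f', h') g"
  shows "mat_inj (g i)"
proof (rule ccontr)
  assume "\<not> mat_inj (g i)"
  from mono have V: "is_rep src tgt V" and V': "is_rep src tgt V'" and g: "rep_hom src tgt V V' g"
    unfolding R_mono_def R_mor_def R_obj_def by auto
  obtain j Y where Y: "Y \<in> carrier_mat (dimv V j) 1" and "Y \<noteq> 0\<^sub>m (dimv V j) 1"
    and g_Y: "g j * Y = 0\<^sub>m (dimv V' j) 1"
    and Y_arrows: "\<And>a. src a = j \<Longrightarrow> amap V a * Y = 0\<^sub>m (dimv V (tgt a)) 1"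
    using kernel_col_annihilated_by_arrows[OF acyc V V' g \<open>\<not> mat_inj (g i)\<close>] by blast
  define y where "y k = (if k = j then Y else 0\<^sub>m (dimv V k) 1)" for k
  have "y j = 0\<^sub>m (dimv V j) 1"
  proof (rule R_mono_kernel_cols_vanish[OF P I mono])
    show "y k \<in> carrier_mat (dimv V k) 1" for k unfolding y_def using Y by simp
    show "amap V a * y (src a) = 0\<^sub>m (dimv V (tgt a)) 1" for a
      unfolding y_def using Y_arrows carrier_matD[OF rep_amap_carrier[OF V]] by simp
    show "g k * y k = 0\<^sub>m (dimv V' k) 1" for k
      unfolding y_def using g_Y carrier_matD[OF rep_hom_carrier[OF g]] by simp
  qed
  with \<open>Y \<noteq> 0\<^sub>m (dimv V j) 1\<close> show False unfolding y_def by simp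
qed

lemma R_epi_imp_mat_surj:
  fixes src tgt :: "'e \<Rightarrow> 'v::finite"
  assumes acyc: "acyclic_quiver src tgt" and P: "is_rep src tgt P" and I: "is_rep src tgt I"
    and epi: "R_epi src tgt P I (V, f, h) (V', f', h') g"
  shows "mat_surj (g i)"
proof (rule ccontr)
  assume "\<not> mat_surj (g i)"
  from epi have V: "is_rep src tgt V" and V': "is_rep src tgt V'" and g: "rep_hom src tgt V V' g"
    unfolding R_epi_def R_mor_def R_obj_def by auto
  obtain j Y where Y: "Y \<in> carrier_mat 1 (dimv V' j)" and "Y \<noteq> 0\<^sub>m 1 (dimv V' j)"
    and Y_g: "Y * g j = 0\<^sub>m 1 (dimv V j)"
    and Y_arrows: "\<And>a. tgt a = j \<Longrightarrow> Y * amap V' a = 0\<^sub>m 1 (dimv V' (src a))"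
    using cokernel_row_annihilated_by_arrows[OF acyc V V' g \<open>\<not> mat_surj (g i)\<close>] by blast
  define y where "y k = (if k = j then Y else 0\<^sub>m 1 (dimv V' k))" for k
  have "y j = 0\<^sub>m 1 (dimv V' j)"
  proof (rule R_epi_cokernel_rows_vanish[OF P I epi])
    show "y k \<in> carrier_mat 1 (dimv V' k)" for k unfolding y_def using Y by simp
    show "y (tgt a) * amap V' a = 0\<^sub>m 1 (dimv V' (src a))" for a
      unfolding y_def using Y_arrows carrier_matD[OF rep_amap_carrier[OF V']] by simp
    show "y k * g k = 0\<^sub>m 1 (dimv V k)" for k
      unfolding y_def using Y_g carrier_matD[OF rep_hom_carrier[OF g]] by simp
  qed
  with \<open>Y \<noteq> 0\<^sub>m 1 (dimv V' j)\<close> show False unfolding y_def by simp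
qed

theorem mainTheorem12:
  fixes src tgt :: "'e::finite \<Rightarrow> 'v::finite"
    and P I V V' :: "('v, 'e) qrep"
    and f h f' h' g :: "'v \<Rightarrow> complex mat"
  assumes "acyclic_quiver src tgt"
    and "projective_rep src tgt P"
    and "injective_rep src tgt I"
    and "R_mor src tgt P I (V, f, h) (V', f', h') g"
  shows "(R_mono src tgt P I (V, f, h) (V', f', h') g \<longleftrightarrow> (\<forall>i. mat_inj (g i))) \<and>
         (R_epi src tgt P I (V, f, h) (V', f', h') g \<longleftrightarrow> (\<forall>i. mat_surj (g i)))"
proof -
  have P: "is_rep src tgt P" using assms(2) unfolding projective_rep_def by simp
  have I: "is_rep src tgt I" using assms(3) unfolding injective_rep_def by simp
  show ?thesis
    using R_mono_imp_mat_inj[OF assms(1) P I] mat_inj_imp_R_mono[OF assms(4)]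
      R_epi_imp_mat_surj[OF assms(1) P I] mat_surj_imp_R_epi[OF assms(4)]
    by blast
qed

end
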